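(* Let $k\ge3$ and let $\sigma=\sigma_1\varepsilon_1\sigma_2\cdots\varepsilon_{k-1}\sigma_k$ be a generalized pattern of length $k$ such that for some $i$ both $\varepsilon_i$ and $\varepsilon_{i+1}$ are empty (i.e., $\sigma$ has three consecutive elements $\sigma_i\sigma_{i+1}\sigma_{i+2}$ with no dash between them). Then there exist constants $0<c,d<1$ such that $c^n n!<\alpha_n(\sigma)<d^n n!$ for all $n\ge k$.
   Context: $\mathfrak S_n$ is the symmetric group on $\{1,\dots,n\}$, permutations written in one-line notation. A generalized pattern of length $m$ is a permutation $\sigma_1\cdots\sigma_m\in\mathfrak S_m$ together with, for each $j=1,\dots,m-1$, a symbol $\varepsilon_j$ which is either a dash "-" or empty; write it $\sigma_1\varepsilon_1\sigma_2\cdots\varepsilon_{m-1}\sigma_m$. A permutation $\pi\in\mathfrak S_n$ contains this pattern if there are indices $i_1<\dots<i_m$ such that (i) whenever $\varepsilon_j$ is empty, $i_{j+1}=i_j+1$, and (ii) for all $a,b$, $\pi_{i_a}<\pi_{i_b}$ iff $\sigma_a<\sigma_b$; otherwise $\pi$ avoids it. $\alpha_n(\sigma)$ is the number of permutations in $\mathfrak S_n$ avoiding $\sigma$. *)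

theory Defs
  imports Complex_Main
begin

definition is_perm :: "nat \<Rightarrow> nat list \<Rightarrow> bool" where
  "is_perm n xs \<longleftrightarrow> distinct xs \<and> set xs = {1..n}"

text \<open>A generalized pattern is a pair (sigma, eps): sigma a permutation of {1..m}
  and eps a list of length m-1, where eps ! j = True means the symbol between
  positions j and j+1 (0-based) is empty (adjacency required), False means a dash.\<close>
definition is_gen_pattern :: "nat list \<Rightarrow> bool list \<Rightarrow> bool" where
  "is_gen_pattern sigma eps \<longleftrightarrow> is_perm (length sigma) sigma \<and> length eps = length sigma - 1"

definition contains_gpat :: "nat list \<Rightarrow> nat list \<Rightarrow> bool list \<Rightarrow> bool" where
  "contains_gpat p sigma eps \<longleftrightarrow>
     (\<exists>idx :: nat \<Rightarrow> nat.
        strict_mono_on {..<length sigma} idx \<and>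
        (\<forall>a<length sigma. idx a < length p) \<and>
        (\<forall>j. Suc j < length sigma \<longrightarrow> eps ! j \<longrightarrow> idx (Suc j) = Suc (idx j)) \<and>
        (\<forall>a<length sigma. \<forall>b<length sigma.
            (p ! (idx a) < p ! (idx b)) \<longleftrightarrow> (sigma ! a < sigma ! b)))"

definition alpha :: "nat \<Rightarrow> nat list \<Rightarrow> bool list \<Rightarrow> nat" where
  "alpha n sigma eps = card {p. is_perm n p \<and> \<not> contains_gpat p sigma eps}"

end

theory Submission
  imports Defs "HOL-Combinatorics.Multiset_Permutations"
begin

text \<open>
  A permutation of length \<open>n + L\<close> amounts to a permutation \<open>p\<close> of length \<open>n\<close>, an
  \<open>L\<close>-subset \<open>S\<close> of the values and a permutation \<open>r\<close> of length \<open>L\<close>: the first \<open>n\<close>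
  entries take the values outside \<open>S\<close> in the relative order \<open>p\<close>, the last \<open>L\<close> entries
  take the values in \<open>S\<close> in the relative order \<open>r\<close>.

  Upper bound: if the joined permutation avoids \<open>\<sigma>\<close>, then so do \<open>p\<close> and \<open>r\<close>. For
  \<open>L = k\<close> this excludes \<open>r = \<sigma>\<close>, so \<open>\<alpha>(n+k) \<le> \<alpha>(n) (n+k choose k) (k! - 1)\<close>, hence
  \<open>\<alpha>(n) \<le> n! (1 - 1/k!)^(n div k)\<close>.

  Lower bound: let \<open>\<tau>\<close> be the order type of the three adjacent entries of \<open>\<sigma>\<close>. A
  permutation without three consecutive entries of type \<open>\<tau>\<close> avoids \<open>\<sigma>\<close>. Among these,
  take those whose last step goes the opposite way to the first step of \<open>\<tau>\<close>. Appending a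
  suitable fixed block of length 3, on any 3-subset of values, creates no \<open>\<tau>\<close>-triple
  across the seam and again ends with a step opposite to \<open>\<tau>\<close>'s first one; so their number
  \<open>g(n)\<close> satisfies \<open>g(n+3) \<ge> (n+3 choose 3) g(n)\<close>, whence
  \<open>g(n) \<ge> n! / (2 \<cdot> 6^(n div 3)) > n! / 4^n\<close>.
\<close>

section \<open>Order-preserving enumeration of a finite set\<close>

definition nth_least :: "nat set \<Rightarrow> nat \<Rightarrow> nat" where
  "nth_least C x = sorted_list_of_set C ! (x - 1)"

lemma nth_least_less_iff:
  assumes "finite C" "x \<in> {1..card C}" "y \<in> {1..card C}"
  shows "nth_least C x < nth_least C y \<longleftrightarrow> x < y"
proof -
  have less: "nth_least C a < nth_least C b"
    if "a < b" "a \<in> {1..card C}" "b \<in> {1..card C}" for a b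
    unfolding nth_least_def
    by (rule sorted_wrt_nth_less[OF strict_sorted_list_of_set]) (use that assms(1) in auto)
  show ?thesis using less[of x y] less[of y x] assms(2,3) by (metis less_asym neqE)
qed

lemma nth_least_in:
  assumes "finite C" "x \<in> {1..card C}"
  shows "nth_least C x \<in> C"
proof -
  have "sorted_list_of_set C ! (x - 1) \<in> set (sorted_list_of_set C)"
    using assms by (intro nth_mem) auto
  then show ?thesis using assms(1) unfolding nth_least_def by simp
qed

lemma inj_on_nth_least: "finite C \<Longrightarrow> inj_on (nth_least C) {1..card C}"
  by (rule inj_onI) (metis nth_least_less_iff nat_neq_iff)

lemma nth_least_image:
  assumes "finite C"
  shows "nth_least C ` {1..card C} = C"
proof (rule card_subset_eq)
  show "card (nth_least C ` {1..card C}) = card C"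
    using card_image[OF inj_on_nth_least[OF assms]] by simp
qed (use assms nth_least_in in auto)

lemma Collect_is_perm: "{p. is_perm n p} = permutations_of_set {1..n}"
  unfolding is_perm_def permutations_of_set_def by auto

lemma card_is_perm: "card {p. is_perm n p} = fact n"
  by (simp add: Collect_is_perm)

lemma finite_is_perm: "finite {p. is_perm n p}"
  by (simp add: Collect_is_perm)

lemma length_is_perm: "is_perm n p \<Longrightarrow> length p = n"
  unfolding is_perm_def by (metis card_atLeastAtMost diff_Suc_1 distinct_card)

lemma is_perm_nth: "is_perm n p \<Longrightarrow> a < length p \<Longrightarrow> p ! a \<in> {1..n}"
  unfolding is_perm_def by (metis nth_mem)

lemma finite_card_subsets: "finite {S. S \<subseteq> {1..N::nat} \<and> card S = L}"
  by (rule finite_subset[of _ "Pow {1..N}"]) auto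

lemma card_card_subsets: "card {S. S \<subseteq> {1..N::nat} \<and> card S = L} = N choose L"
  using n_subsets[of "{1..N}" L] by simp

lemma fact_add_eq: "fact n * ((n + L) choose L) * fact L = (fact (n + L) :: nat)"
  using binomial_fact_lemma[of L "n + L"] by (simp add: algebra_simps)

section \<open>Joining two permutations\<close>

fun join_perm :: "nat \<Rightarrow> nat \<Rightarrow> nat list \<times> nat set \<times> nat list \<Rightarrow> nat list" where
  "join_perm n L (p, S, r) = map (nth_least ({1..n+L} - S)) p @ map (nth_least S) r"

definition join_dom :: "nat \<Rightarrow> nat \<Rightarrow> (nat list \<times> nat set \<times> nat list) set" where
  "join_dom n L = {p. is_perm n p} \<times> {S. S \<subseteq> {1..n+L} \<and> card S = L} \<times> {r. is_perm L r}"

lemma join_domD: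
  assumes "(p, S, r) \<in> join_dom n L"
  shows "is_perm n p" "S \<subseteq> {1..n+L}" "card S = L" "is_perm L r"
    and "finite S" "card ({1..n+L} - S) = n" "length p = n" "length r = L"
  using assms finite_subset[of S "{1..n+L}"] length_is_perm[of n p] length_is_perm[of L r]
  by (auto simp: join_dom_def card_Diff_subset)

lemma card_join_dom: "card (join_dom n L) = fact (n + L)"
  unfolding join_dom_def card_cartesian_product card_is_perm card_card_subsets
  using fact_add_eq by (simp add: mult.assoc)

lemma is_perm_join_perm:
  assumes "(p, S, r) \<in> join_dom n L"
  shows "is_perm (n + L) (join_perm n L (p, S, r))"
proof -
  let ?C = "{1..n+L} - S"
  note D = join_domD[OF assms]
  have sp: "set p = {1..card ?C}" and sr: "set r = {1..card S}"
    using D by (simp_all add: is_perm_def)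
  have "distinct (map (nth_least ?C) p)" "distinct (map (nth_least S) r)"
    using D inj_on_nth_least[of ?C] inj_on_nth_least[of S] sp sr
    by (simp_all add: distinct_map is_perm_def)
  moreover have "set (map (nth_least ?C) p) = ?C" "set (map (nth_least S) r) = S"
    using nth_least_image[of ?C] nth_least_image[of S] sp sr D by simp_all
  ultimately show ?thesis using D(2) unfolding is_perm_def by auto
qed

lemma map_nth_least_eq_iff:
  assumes "finite C" "set p \<subseteq> {1..card C}" "set p' \<subseteq> {1..card C}"
  shows "map (nth_least C) p = map (nth_least C) p' \<longleftrightarrow> p = p'"
  using map_inj_on[of "nth_least C" p p'] inj_on_subset[OF inj_on_nth_least[OF assms(1)]] assms(2,3)
  by auto

lemma inj_on_join_perm: "inj_on (join_perm n L) (join_dom n L)"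
proof (rule inj_onI)
  fix t t' assume t: "t \<in> join_dom n L" and t': "t' \<in> join_dom n L"
    and eq: "join_perm n L t = join_perm n L t'"
  obtain p S r p' S' r' where tt: "t = (p, S, r)" "t' = (p', S', r')"
    by (cases t, cases t') auto
  note D = join_domD[OF t[unfolded tt]] and D' = join_domD[OF t'[unfolded tt]]
  have left: "map (nth_least ({1..n+L} - S)) p = map (nth_least ({1..n+L} - S')) p'"
    and right: "map (nth_least S) r = map (nth_least S') r'"
    using eq D(7) D'(7) by (simp_all add: tt append_eq_append_conv)
  have "S = set (map (nth_least S) r)" "S' = set (map (nth_least S') r')"
    using nth_least_image[of S] nth_least_image[of S'] D D' by (simp_all add: is_perm_def)
  then have "S' = S" using right by simp
  then show "t = t'"
    using tt left right map_nth_least_eq_iff D D' by (simp add: is_perm_def)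
qed

lemma join_perm_image: "join_perm n L ` join_dom n L = {q. is_perm (n + L) q}"
proof (rule card_subset_eq)
  show "join_perm n L ` join_dom n L \<subseteq> {q. is_perm (n + L) q}"
    using is_perm_join_perm by auto
qed (simp_all add: finite_is_perm card_image[OF inj_on_join_perm] card_join_dom card_is_perm)

lemma length_join_perm: "(p, S, r) \<in> join_dom n L \<Longrightarrow> length (join_perm n L (p, S, r)) = n + L"
  using join_domD(7,8) by simp

lemma join_perm_less_left:
  assumes "(p, S, r) \<in> join_dom n L" "a < n" "b < n"
  shows "join_perm n L (p, S, r) ! a < join_perm n L (p, S, r) ! b \<longleftrightarrow> p ! a < p ! b"
proof -
  note D = join_domD[OF assms(1)]
  have "p ! a \<in> {1..card ({1..n+L} - S)}" "p ! b \<in> {1..card ({1..n+L} - S)}"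
    using is_perm_nth[OF D(1)] assms D by auto
  then show ?thesis using assms D nth_least_less_iff[of "{1..n+L} - S"] by (simp add: nth_append)
qed

lemma join_perm_less_right:
  assumes "(p, S, r) \<in> join_dom n L" "a < L" "b < L"
  shows "join_perm n L (p, S, r) ! (n + a) < join_perm n L (p, S, r) ! (n + b) \<longleftrightarrow> r ! a < r ! b"
proof -
  note D = join_domD[OF assms(1)]
  have "r ! a \<in> {1..card S}" "r ! b \<in> {1..card S}"
    using is_perm_nth[OF D(4)] assms D by auto
  then show ?thesis using assms D nth_least_less_iff[of S] by (simp add: nth_append)
qed

lemma contains_gpat_self: "contains_gpat sigma sigma eps"
  unfolding contains_gpat_def by (intro exI[of _ id]) (auto simp: strict_mono_on_def)

lemma contains_gpat_segment:
  assumes "contains_gpat p sigma eps" "off + length p \<le> length q"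
    and "\<And>a b. a < length p \<Longrightarrow> b < length p \<Longrightarrow>
           q ! (off + a) < q ! (off + b) \<longleftrightarrow> p ! a < p ! b"
  shows "contains_gpat q sigma eps"
proof -
  obtain idx where mono: "strict_mono_on {..<length sigma} idx"
    and bound: "\<forall>a<length sigma. idx a < length p"
    and adj: "\<forall>j. Suc j < length sigma \<longrightarrow> eps ! j \<longrightarrow> idx (Suc j) = Suc (idx j)"
    and iso: "\<forall>a<length sigma. \<forall>b<length sigma. p ! idx a < p ! idx b \<longleftrightarrow> sigma ! a < sigma ! b"
    using assms(1) unfolding contains_gpat_def by blast
  show ?thesis unfolding contains_gpat_def
  proof (intro exI[of _ "\<lambda>a. off + idx a"] conjI allI impI)
    show "strict_mono_on {..<length sigma} (\<lambda>a. off + idx a)"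
      using mono by (auto simp: strict_mono_on_def)
  qed (use bound adj iso assms(2,3) in auto)
qed

lemma contains_gpat_join_perm:
  assumes "(p, S, r) \<in> join_dom n L" "contains_gpat p sigma eps \<or> contains_gpat r sigma eps"
  shows "contains_gpat (join_perm n L (p, S, r)) sigma eps"
  using assms(2)
proof
  assume "contains_gpat p sigma eps"
  then show ?thesis
    by (rule contains_gpat_segment[where off = 0])
      (use join_perm_less_left[OF assms(1)] join_domD[OF assms(1)] in auto)
next
  assume "contains_gpat r sigma eps"
  then show ?thesis
    by (rule contains_gpat_segment[where off = n])
      (use join_perm_less_right[OF assms(1)] join_domD[OF assms(1)] in auto)
qed

section \<open>The upper bound\<close>

definition avoiders :: "nat list \<Rightarrow> bool list \<Rightarrow> nat \<Rightarrow> nat list set" where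
  "avoiders sigma eps n = {p. is_perm n p \<and> \<not> contains_gpat p sigma eps}"

lemma alpha_eq_card_avoiders: "alpha n sigma eps = card (avoiders sigma eps n)"
  unfolding alpha_def avoiders_def ..

lemma finite_avoiders: "finite (avoiders sigma eps n)"
  unfolding avoiders_def using finite_is_perm by (rule finite_subset[rotated]) auto

lemma card_avoiders_add_le:
  "card (avoiders sigma eps (n + L)) \<le>
     card (avoiders sigma eps n) * ((n + L) choose L) * card (avoiders sigma eps L)"
proof -
  define T where
    "T = avoiders sigma eps n \<times> {S. S \<subseteq> {1..n+L} \<and> card S = L} \<times> avoiders sigma eps L"
  have "avoiders sigma eps (n + L) \<subseteq> join_perm n L ` T"
  proof
    fix q assume q: "q \<in> avoiders sigma eps (n + L)"
    then have "q \<in> join_perm n L ` join_dom n L"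
      unfolding avoiders_def join_perm_image by simp
    then obtain p S r where t: "(p, S, r) \<in> join_dom n L" and q_eq: "q = join_perm n L (p, S, r)"
      by (auto simp del: join_perm.simps)
    then have "\<not> contains_gpat p sigma eps" "\<not> contains_gpat r sigma eps"
      using q contains_gpat_join_perm[OF t] unfolding avoiders_def by auto
    then have "(p, S, r) \<in> T"
      using t unfolding T_def join_dom_def avoiders_def by simp
    then show "q \<in> join_perm n L ` T" using q_eq by blast
  qed
  moreover have "finite T"
    unfolding T_def using finite_avoiders finite_card_subsets by blast
  ultimately have "card (avoiders sigma eps (n + L)) \<le> card T"
    by (meson card_image_le card_mono finite_imageI order_trans)
  then show ?thesis
    unfolding T_def card_cartesian_product card_card_subsets by (simp add: mult.assoc)
qed

lemma card_avoiders_self_less: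
  assumes "is_perm (length sigma) sigma"
  shows "card (avoiders sigma eps (length sigma)) < fact (length sigma)"
proof -
  have "avoiders sigma eps (length sigma) \<subset> {p. is_perm (length sigma) p}"
    using assms contains_gpat_self unfolding avoiders_def by blast
  then show ?thesis
    using psubset_card_mono[OF finite_is_perm] card_is_perm by metis
qed

lemma card_avoiders_le:
  assumes "is_perm k sigma" "length sigma = k" "k \<ge> 1"
  shows "real (card (avoiders sigma eps n)) \<le> fact n * (1 - 1 / fact k) ^ (n div k)"
proof (induction n rule: less_induct)
  case (less n)
  show ?case
  proof (cases "n < k")
    case True
    have "card (avoiders sigma eps n) \<le> card {p. is_perm n p}"
      unfolding avoiders_def by (rule card_mono[OF finite_is_perm]) auto
    then have "real (card (avoiders sigma eps n)) \<le> fact n"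
      by (metis card_is_perm of_nat_fact of_nat_le_iff)
    then show ?thesis using True by simp
  next
    case False
    define m where "m = n - k"
    have n: "n = m + k" using False m_def by simp
    then have n_div: "n div k = Suc (m div k)" using assms(3) by simp
    have IH: "real (card (avoiders sigma eps m)) \<le> fact m * (1 - 1 / fact k) ^ (m div k)"
      using less assms(3) n by simp
    have "card (avoiders sigma eps k) + 1 \<le> fact k"
      using card_avoiders_self_less[of sigma eps] assms(1,2) by simp
    then have self: "real (card (avoiders sigma eps k)) \<le> fact k - 1"
      by (metis of_nat_1 of_nat_add of_nat_fact of_nat_le_iff le_diff_eq)
    have fact_n: "fact m * real (n choose k) * fact k = fact n"
      using fact_add_eq[of m k] n by (metis of_nat_fact of_nat_mult)
    have "real (card (avoiders sigma eps n)) \<le>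
        real (card (avoiders sigma eps m)) * real (n choose k) * real (card (avoiders sigma eps k))"
      using card_avoiders_add_le[of sigma eps m k] n by (metis of_nat_le_iff of_nat_mult)
    also have "\<dots> \<le> fact m * (1 - 1 / fact k) ^ (m div k) * real (n choose k) * (fact k - 1)"
      using IH self by (intro mult_mono) auto
    also have "\<dots> = (fact m * real (n choose k) * fact k) * (1 - 1 / fact k) ^ Suc (m div k)"
      by (simp add: field_simps)
    also have "\<dots> = fact n * (1 - 1 / fact k) ^ (n div k)"
      unfolding fact_n n_div ..
    finally show ?thesis .
  qed
qed

lemma alpha_upper_bound:
  assumes "is_perm k sigma" "length sigma = k" "k \<ge> 2"
  shows "\<exists>d. 0 < d \<and> d < 1 \<and> (\<forall>n\<ge>k. real (alpha n sigma eps) < d ^ n * fact n)"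
proof -
  define q :: real where "q = 1 - 1 / fact k"
  define d where "d = root (2 * k) q"
  have "(fact 1 :: real) < fact k"
    using assms(3) by (intro fact_less_mono) auto
  then have q: "0 < q" "q < 1"
    unfolding q_def by (simp_all add: field_simps)
  then have d: "0 < d" "d < 1" "d ^ (2 * k) = q"
    unfolding d_def using assms(3) by (simp_all add: real_root_gt_zero)
  have "real (alpha n sigma eps) < d ^ n * fact n" if "k \<le> n" for n
  proof -
    have "k div k \<le> n div k" using div_le_mono[OF that] .
    then have "k \<le> k * (n div k)" using assms(3) by simp
    moreover have "n = k * (n div k) + n mod k" "n mod k < k"
      using assms(3) by simp_all
    ultimately have "n < 2 * k * (n div k)" by linarith
    have "real (alpha n sigma eps) \<le> q ^ (n div k) * fact n"
      using card_avoiders_le[OF assms(1,2), of eps n] assms(3)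
      unfolding alpha_eq_card_avoiders q_def by (simp add: mult.commute)
    also have "\<dots> = d ^ (2 * k * (n div k)) * fact n"
      using d(3) by (simp add: power_mult)
    also have "\<dots> < d ^ n * fact n"
      using d \<open>n < 2 * k * (n div k)\<close>
      by (intro mult_strict_right_mono power_strict_decreasing) auto
    finally show ?thesis .
  qed
  with d show ?thesis by blast
qed

section \<open>The lower bound\<close>

definition consec_type :: "bool \<Rightarrow> bool \<Rightarrow> bool \<Rightarrow> nat list \<Rightarrow> nat \<Rightarrow> bool" where
  "consec_type x y z q j \<longleftrightarrow>
     (q ! j < q ! Suc j) = x \<and> (q ! Suc j < q ! Suc (Suc j)) = y \<and> (q ! j < q ! Suc (Suc j)) = z"

definition extendable :: "bool \<Rightarrow> bool \<Rightarrow> bool \<Rightarrow> nat list \<Rightarrow> bool" where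
  "extendable x y z q \<longleftrightarrow>
     (\<forall>j. Suc (Suc j) < length q \<longrightarrow> \<not> consec_type x y z q j) \<and>
     (2 \<le> length q \<longrightarrow> (q ! (length q - 2) < q ! (length q - 1)) = (\<not> x))"

definition block3 :: "bool \<Rightarrow> bool \<Rightarrow> bool \<Rightarrow> nat list" where
  "block3 x y z =
     (if x = y then (if x then [3, 2, 1] else [1, 2, 3])
      else if x then (if z then [2, 3, 1] else [1, 3, 2])
      else (if z then [3, 1, 2] else [2, 1, 3]))"

lemma
  shows is_perm_block3: "is_perm 3 (block3 x y z)"
    and block3_first_step: "(block3 x y z ! 0 < block3 x y z ! 1) = (\<not> y)"
    and block3_second_step: "(block3 x y z ! 1 < block3 x y z ! 2) = (\<not> x)"
    and block3_not_consec_type: "\<not> consec_type x y z (block3 x y z) 0"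
proof -
  have "{1..3::nat} = {1, 2, 3}" by auto
  then show "is_perm 3 (block3 x y z)"
    by (cases x; cases y; cases z) (auto simp: block3_def is_perm_def)
qed (cases x; cases y; cases z; simp add: block3_def consec_type_def)+

lemma consec_type_cong:
  assumes "\<And>a b. a \<le> 2 \<Longrightarrow> b \<le> 2 \<Longrightarrow> q ! (i + a) < q ! (i + b) \<longleftrightarrow> p ! (j + a) < p ! (j + b)"
  shows "consec_type x y z q i \<longleftrightarrow> consec_type x y z p j"
  using assms[of 0 1] assms[of 1 2] assms[of 0 2] by (simp add: consec_type_def numeral_2_eq_2)

lemma extendable_join_block3:
  assumes t: "(p, S, block3 x y z) \<in> join_dom n 3" and p: "extendable x y z p"
  shows "extendable x y z (join_perm n 3 (p, S, block3 x y z))"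
proof -
  define q where "q = join_perm n 3 (p, S, block3 x y z)"
  have len: "length q = n + 3" "length p = n"
    unfolding q_def using length_join_perm[OF t] join_domD(7)[OF t] by simp_all
  have left: "q ! a < q ! b \<longleftrightarrow> p ! a < p ! b" if "a < n" "b < n" for a b
    unfolding q_def using join_perm_less_left[OF t that] .
  have right: "q ! (n + a) < q ! (n + b) \<longleftrightarrow> block3 x y z ! a < block3 x y z ! b"
    if "a < 3" "b < 3" for a b
    unfolding q_def using join_perm_less_right[OF t that] .
  have "\<not> consec_type x y z q j" if j: "Suc (Suc j) < n + 3" for j
  proof -
    consider (inside) "Suc (Suc j) < n" | (seam_left) "Suc (Suc j) = n"
      | (seam_right) "Suc j = n" | (block) "j = n"
      using j by linarith
    then show ?thesis
    proof cases
      case inside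
      then have "consec_type x y z q j \<longleftrightarrow> consec_type x y z p j"
        by (intro consec_type_cong) (simp add: left)
      then show ?thesis using p inside len unfolding extendable_def by auto
    next
      case seam_left
      then have "(q ! j < q ! Suc j) = (p ! (length p - 2) < p ! (length p - 1))"
        using len left[of j "Suc j"] by (simp add: seam_left[symmetric])
      also have "\<dots> = (\<not> x)"
        using p seam_left len unfolding extendable_def by simp
      finally show ?thesis unfolding consec_type_def by simp
    next
      case seam_right
      then have "(q ! Suc j < q ! Suc (Suc j)) = (\<not> y)"
        using right[of 0 1] block3_first_step by simp
      then show ?thesis unfolding consec_type_def by simp
    next
      case block
      then have "consec_type x y z q j \<longleftrightarrow> consec_type x y z (block3 x y z) 0"
        by (intro consec_type_cong) (simp add: right)
      then show ?thesis using block3_not_consec_type by simp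
    qed
  qed
  moreover have "(q ! (length q - 2) < q ! (length q - 1)) = (\<not> x)"
    using right[of 1 2] block3_second_step len by (simp add: add.commute)
  ultimately show ?thesis
    unfolding extendable_def q_def[symmetric] using len by simp
qed

lemma finite_extendable_perms: "finite {q. is_perm n q \<and> extendable x y z q}"
  using finite_is_perm by (rule finite_subset[rotated]) auto

lemma card_extendable_perms_add3_ge:
  "card {p. is_perm n p \<and> extendable x y z p} * ((n + 3) choose 3)
     \<le> card {q. is_perm (n + 3) q \<and> extendable x y z q}"
proof -
  define T where "T = {p. is_perm n p \<and> extendable x y z p}
    \<times> {S. S \<subseteq> {1..n+3} \<and> card S = 3} \<times> {block3 x y z}"
  have T: "T \<subseteq> join_dom n 3"
    unfolding T_def join_dom_def using is_perm_block3 by auto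
  have "card T = card (join_perm n 3 ` T)"
    using card_image[OF inj_on_subset[OF inj_on_join_perm T]] by simp
  also have "\<dots> \<le> card {q. is_perm (n + 3) q \<and> extendable x y z q}"
  proof (rule card_mono[OF finite_extendable_perms], rule subsetI)
    fix q assume "q \<in> join_perm n 3 ` T"
    then obtain p S where pS: "(p, S, block3 x y z) \<in> T"
      and q_eq: "q = join_perm n 3 (p, S, block3 x y z)"
      unfolding T_def by (auto simp del: join_perm.simps)
    then have t: "(p, S, block3 x y z) \<in> join_dom n 3" and "extendable x y z p"
      using T unfolding T_def by auto
    then show "q \<in> {q. is_perm (n + 3) q \<and> extendable x y z q}"
      using q_eq is_perm_join_perm[OF t] extendable_join_block3[OF t] by (simp del: join_perm.simps)
  qed
  finally show ?thesis
    unfolding T_def card_cartesian_product card_card_subsets by simp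
qed

lemma extendable_perm_exists: "n < 3 \<Longrightarrow> \<exists>q. is_perm n q \<and> extendable x y z q"
proof -
  assume "n < 3"
  then consider "n = 0" | "n = 1" | "n = 2" by linarith
  then show ?thesis
  proof cases
    case 1
    then show ?thesis by (intro exI[of _ "[]"]) (simp add: is_perm_def extendable_def)
  next
    case 2
    then show ?thesis by (intro exI[of _ "[1]"]) (simp add: is_perm_def extendable_def)
  next
    case 3
    have "{1..2::nat} = {1, 2}" by auto
    with 3 show ?thesis
      by (intro exI[of _ "if x then [2, 1] else [1, 2]"])
        (auto simp: is_perm_def extendable_def)
  qed
qed

lemma card_extendable_perms_ge:
  "fact n / (2 * 6 ^ (n div 3)) \<le> real (card {q. is_perm n q \<and> extendable x y z q})"
proof (induction n rule: less_induct)
  case (less n)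
  show ?case
  proof (cases "n < 3")
    case True
    then have "fact n \<le> (fact 2 :: real)"
      by (intro fact_mono) simp
    then have "fact n \<le> (2 :: real)"
      by simp
    moreover have "{q. is_perm n q \<and> extendable x y z q} \<noteq> {}"
      using extendable_perm_exists[OF True] by blast
    then have "1 \<le> card {q. is_perm n q \<and> extendable x y z q}"
      using finite_extendable_perms by (simp add: Suc_le_eq card_gt_0_iff)
    ultimately show ?thesis using True by simp
  next
    case False
    define m where "m = n - 3"
    have n: "n = m + 3" using False m_def by simp
    then have n_div: "n div 3 = Suc (m div 3)" by simp
    have "fact 3 = (6 :: nat)"
      by (simp add: eval_nat_numeral)
    then have "fact m * (n choose 3) * 6 = (fact n :: nat)"
      using fact_add_eq[of m 3] n by simp
    then have "fact m * real (n choose 3) * 6 = fact n"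
      by (metis of_nat_fact of_nat_mult of_nat_numeral)
    then have "fact n / (2 * 6 ^ (n div 3)) = fact m / (2 * 6 ^ (m div 3)) * real (n choose 3)"
      unfolding n_div by (simp add: field_simps)
    also have "\<dots> \<le> real (card {q. is_perm m q \<and> extendable x y z q}) * real (n choose 3)"
      using less n by (intro mult_right_mono) auto
    also have "\<dots> \<le> real (card {q. is_perm n q \<and> extendable x y z q})"
      using card_extendable_perms_add3_ge[of m x y z] n by (metis of_nat_le_iff of_nat_mult)
    finally show ?thesis .
  qed
qed

lemma extendable_not_contains_gpat:
  assumes "Suc (Suc i) < length sigma" "eps ! i" "eps ! Suc i"
    and "consec_type x y z sigma i" "extendable x y z q"
  shows "\<not> contains_gpat q sigma eps"
proof
  assume "contains_gpat q sigma eps"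
  then obtain idx where bound: "\<forall>a<length sigma. idx a < length q"
    and adj: "\<forall>j. Suc j < length sigma \<longrightarrow> eps ! j \<longrightarrow> idx (Suc j) = Suc (idx j)"
    and iso: "\<forall>a<length sigma. \<forall>b<length sigma. q ! idx a < q ! idx b \<longleftrightarrow> sigma ! a < sigma ! b"
    unfolding contains_gpat_def by blast
  have idx: "idx (Suc i) = Suc (idx i)" "idx (Suc (Suc i)) = Suc (Suc (idx i))"
    using adj assms(1-3) by simp_all
  then have "Suc (Suc (idx i)) < length q"
    using bound assms(1) by metis
  moreover have "consec_type x y z q (idx i)"
    using assms(4) iso assms(1) idx unfolding consec_type_def by (metis Suc_lessD)
  ultimately show False
    using assms(5) unfolding extendable_def by blast
qed

lemma two_mult_six_power_less_four_power:
  assumes "3 \<le> n"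
  shows "2 * 6 ^ (n div 3) < (4 :: real) ^ n"
proof -
  have m: "1 \<le> n div 3" using assms by simp
  have "(2 :: real) * 6 ^ (n div 3) \<le> 2 ^ (n div 3) * 6 ^ (n div 3)"
    using power_increasing[OF m, of "2 :: real"] by (intro mult_right_mono) auto
  also have "\<dots> = 12 ^ (n div 3)"
    by (simp flip: power_mult_distrib)
  also have "\<dots> < 64 ^ (n div 3)"
    using m by (intro power_strict_mono) auto
  also have "\<dots> = 4 ^ (3 * (n div 3))"
    by (simp add: power_mult)
  also have "\<dots> \<le> 4 ^ n"
    by (intro power_increasing) auto
  finally show ?thesis .
qed

lemma alpha_lower_bound:
  assumes "Suc (Suc i) < length sigma" "eps ! i" "eps ! Suc i" "3 \<le> n"
  shows "(1 / 4) ^ n * fact n < real (alpha n sigma eps)"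
proof -
  define x where "x = (sigma ! i < sigma ! Suc i)"
  define y where "y = (sigma ! Suc i < sigma ! Suc (Suc i))"
  define z where "z = (sigma ! i < sigma ! Suc (Suc i))"
  have "consec_type x y z sigma i"
    unfolding consec_type_def x_def y_def z_def by simp
  then have sub: "{q. is_perm n q \<and> extendable x y z q} \<subseteq> avoiders sigma eps n"
    unfolding avoiders_def using extendable_not_contains_gpat[OF assms(1-3)] by blast
  have "(1 / 4) ^ n * fact n = (fact n :: real) / 4 ^ n"
    by (simp add: power_divide)
  also have "\<dots> < fact n / (2 * 6 ^ (n div 3))"
    using two_mult_six_power_less_four_power[OF assms(4)] by (intro divide_strict_left_mono) auto
  also have "\<dots> \<le> real (card {q. is_perm n q \<and> extendable x y z q})"
    by (rule card_extendable_perms_ge)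
  also have "\<dots> \<le> real (alpha n sigma eps)"
    unfolding alpha_eq_card_avoiders using card_mono[OF finite_avoiders sub] by simp
  finally show ?thesis .
qed

theorem mainTheorem3:
  fixes sigma :: "nat list" and eps :: "bool list" and k :: nat
  assumes "k \<ge> 3"
    and "length sigma = k"
    and "is_gen_pattern sigma eps"
    and "\<exists>i. Suc i < k - 1 \<and> eps ! i \<and> eps ! Suc i"
  shows "\<exists>c d :: real. 0 < c \<and> c < 1 \<and> 0 < d \<and> d < 1 \<and>
           (\<forall>n\<ge>k. c ^ n * fact n < real (alpha n sigma eps) \<and>
                    real (alpha n sigma eps) < d ^ n * fact n)"
proof -
  obtain i where i: "Suc i < k - 1" "eps ! i" "eps ! Suc i"
    using assms(4) by blast
  have "is_perm k sigma"
    using assms(2,3) unfolding is_gen_pattern_def by simp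
  then obtain d where d: "0 < d" "d < 1" "\<forall>n\<ge>k. real (alpha n sigma eps) < d ^ n * fact n"
    using alpha_upper_bound[OF _ assms(2), of eps] assms(1) by auto
  have "(1 / 4) ^ n * fact n < real (alpha n sigma eps)" if "k \<le> n" for n
    using alpha_lower_bound[of i sigma eps n] i assms(1,2) that by simp
  with d show ?thesis
    by (intro exI[of _ "1 / 4"] exI[of _ d]) auto
qed

end
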